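(* Let $\mathbf k$ be a field which is finite or algebraically closed, $V$ a finite-dimensional $\mathbf k$-vector space with a nondegenerate quadratic form $Q$, and $X^*$ a $Q$-filtration of $V$. Then $\{1+N:N\in E^{\ge2}X^*\}\subset SO_Q$.
   Context: $\langle x,y\rangle=Q(x+y)-Q(x)-Q(y)$, $R$ its radical; $Q$ is nondegenerate if $Q|_R$ is injective. $W^\perp=\{x:\langle x,W\rangle=0\}$. $O_Q=\{T\in GL(V):Q(Tx)=Q(x)\ \forall x\}$; if $\mathbf k$ is algebraically closed $SO_Q$ is the identity component of $O_Q$, if $\mathbf k$ is finite $SO_Q=O_Q\cap SO_{\tilde Q}$ with $\tilde Q$ the extension of $Q$ to an algebraic closure. $\tilde{\mathcal M}_Q$ is the set of nilpotent $N\in\mathrm{End}(V)$ with $Q(Nx)=-\langle x,Nx\rangle$ for all $x$. A $Q$-filtration is a decreasing family $(X^{\ge a})_{a\in\mathbb Z}$ of subspaces, $0$ for $a\gg0$, $V$ for $a\ll0$, with $Q|_{X^{\ge a}}=0$ and $X^{\ge1-a}=(X^{\ge a})^\perp$ for $a\ge1$. $E^{\ge2}X^*=\{N\in\tilde{\mathcal M}_Q:NX^{\ge a}\subset X^{\ge a+2}\ \forall a\}$. *)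

theory Defs
  imports "HOL-Analysis.Analysis" "HOL-Computational_Algebra.Polynomial"
begin

text \<open>The vector space V is modelled as 'k^'n (coordinates w.r.t. a basis);
 endomorphisms of V as matrices 'k^'n^'n acting by *v.\<close>

definition polar :: "('k::field^'n \<Rightarrow> 'k) \<Rightarrow> 'k^'n \<Rightarrow> 'k^'n \<Rightarrow> 'k" where
  "polar Q x y = Q (x + y) - Q x - Q y"

definition quadratic_form :: "('k::field^'n \<Rightarrow> 'k) \<Rightarrow> bool" where
  "quadratic_form Q \<longleftrightarrow>
     (\<forall>c x. Q (c *s x) = c^2 * Q x) \<and>
     (\<forall>x y z. polar Q (x + y) z = polar Q x z + polar Q y z) \<and>
     (\<forall>c x y. polar Q (c *s x) y = c * polar Q x y)"

definition radical :: "('k::field^'n \<Rightarrow> 'k) \<Rightarrow> ('k^'n) set" where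
  "radical Q = {x. \<forall>y. polar Q x y = 0}"

definition nondegenerate :: "('k::field^'n \<Rightarrow> 'k) \<Rightarrow> bool" where
  "nondegenerate Q \<longleftrightarrow> inj_on Q (radical Q)"

definition perp :: "('k::field^'n \<Rightarrow> 'k) \<Rightarrow> ('k^'n) set \<Rightarrow> ('k^'n) set" where
  "perp Q W = {x. \<forall>w\<in>W. polar Q x w = 0}"

definition lin_subspace :: "('k::field^'n) set \<Rightarrow> bool" where
  "lin_subspace W \<longleftrightarrow> 0 \<in> W \<and> (\<forall>x\<in>W. \<forall>y\<in>W. x + y \<in> W) \<and> (\<forall>c. \<forall>x\<in>W. c *s x \<in> W)"

definition Q_filtration :: "('k::field^'n \<Rightarrow> 'k) \<Rightarrow> (int \<Rightarrow> ('k^'n) set) \<Rightarrow> bool" where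
  "Q_filtration Q X \<longleftrightarrow>
     (\<forall>a. lin_subspace (X a)) \<and>
     (\<forall>a b. a \<le> b \<longrightarrow> X b \<subseteq> X a) \<and>
     (\<exists>a0. \<forall>a\<ge>a0. X a = {0}) \<and>
     (\<exists>a1. \<forall>a\<le>a1. X a = UNIV) \<and>
     (\<forall>a\<ge>1. (\<forall>x\<in>X a. Q x = 0) \<and> X (1 - a) = perp Q (X a))"

primrec mpow :: "'k::semiring_1^'n^'n \<Rightarrow> nat \<Rightarrow> 'k^'n^'n" where
  "mpow A 0 = mat 1"
| "mpow A (Suc m) = A ** mpow A m"

definition nilpotent_mat :: "'k::semiring_1^'n^'n \<Rightarrow> bool" where
  "nilpotent_mat N \<longleftrightarrow> (\<exists>m. mpow N m = 0)"

definition tilde_M :: "('k::field^'n \<Rightarrow> 'k) \<Rightarrow> ('k^'n^'n) set" where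
  "tilde_M Q = {N. nilpotent_mat N \<and> (\<forall>x. Q (N *v x) = - polar Q x (N *v x))}"

definition E2 :: "('k::field^'n \<Rightarrow> 'k) \<Rightarrow> (int \<Rightarrow> ('k^'n) set) \<Rightarrow> ('k^'n^'n) set" where
  "E2 Q X = {N \<in> tilde_M Q. \<forall>a. \<forall>x\<in>X a. N *v x \<in> X (a + 2)}"

definition O_Q :: "('k::field^'n \<Rightarrow> 'k) \<Rightarrow> ('k^'n^'n) set" where
  "O_Q Q = {T. invertible T \<and> (\<forall>x. Q (T *v x) = Q x)}"

text \<open>Zariski topology on the space of matrices: polynomial functions in the entries.\<close>

inductive_set mat_polys :: "('k::field^'n^'n \<Rightarrow> 'k) set" where
  const: "(\<lambda>A. c) \<in> mat_polys"
| entry: "(\<lambda>A. A $ i $ j) \<in> mat_polys"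
| add: "f \<in> mat_polys \<Longrightarrow> g \<in> mat_polys \<Longrightarrow> (\<lambda>A. f A + g A) \<in> mat_polys"
| mult: "f \<in> mat_polys \<Longrightarrow> g \<in> mat_polys \<Longrightarrow> (\<lambda>A. f A * g A) \<in> mat_polys"

definition zariski_closedin :: "('k::field^'n^'n) set \<Rightarrow> ('k^'n^'n) set \<Rightarrow> bool" where
  "zariski_closedin S C \<longleftrightarrow> (\<exists>F \<subseteq> mat_polys. C = S \<inter> {A. \<forall>f\<in>F. f A = 0})"

definition zariski_connected :: "('k::field^'n^'n) set \<Rightarrow> bool" where
  "zariski_connected S \<longleftrightarrow>
     \<not> (\<exists>C1 C2. zariski_closedin S C1 \<and> zariski_closedin S C2 \<and> C1 \<inter> C2 = {} \<and>
               C1 \<union> C2 = S \<and> C1 \<noteq> {} \<and> C2 \<noteq> {})"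

definition identity_component :: "('k::field^'n^'n) set \<Rightarrow> ('k^'n^'n) set" where
  "identity_component S = \<Union>{C. C \<subseteq> S \<and> mat 1 \<in> C \<and> zariski_connected C}"

definition alg_closed :: "'k::field itself \<Rightarrow> bool" where
  "alg_closed _ \<longleftrightarrow> (\<forall>p::'k poly. 0 < degree p \<longrightarrow> (\<exists>x. poly p x = 0))"

definition is_alg_closure :: "('k::field \<Rightarrow> 'K::field) \<Rightarrow> bool" where
  "is_alg_closure \<phi> \<longleftrightarrow>
     \<phi> 1 = 1 \<and> (\<forall>a b. \<phi> (a + b) = \<phi> a + \<phi> b) \<and> (\<forall>a b. \<phi> (a * b) = \<phi> a * \<phi> b) \<and>
     alg_closed TYPE('K) \<and>
     (\<forall>y. \<exists>p::'k poly. p \<noteq> 0 \<and> poly (map_poly \<phi> p) y = 0)"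

text \<open>Qt is the extension of Q to K^n = V tensor K.\<close>
definition extends_qf :: "('k::field \<Rightarrow> 'K::field) \<Rightarrow> ('k^'n \<Rightarrow> 'k) \<Rightarrow> ('K^'n \<Rightarrow> 'K) \<Rightarrow> bool" where
  "extends_qf \<phi> Q Qt \<longleftrightarrow> quadratic_form Qt \<and>
     (\<forall>i. Qt (axis i 1) = \<phi> (Q (axis i 1))) \<and>
     (\<forall>i j. polar Qt (axis i 1) (axis j 1) = \<phi> (polar Q (axis i 1) (axis j 1)))"

definition SO_Q_closed :: "('k::field^'n \<Rightarrow> 'k) \<Rightarrow> ('k^'n^'n) set" where
  "SO_Q_closed Q = identity_component (O_Q Q)"

definition SO_Q_finite :: "('k::field \<Rightarrow> 'K::field) \<Rightarrow> ('k^'n \<Rightarrow> 'k) \<Rightarrow> ('k^'n^'n) set" where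
  "SO_Q_finite \<phi> Q = {T \<in> O_Q Q. \<forall>Qt. extends_qf \<phi> Q Qt \<longrightarrow> map_matrix \<phi> T \<in> SO_Q_closed Qt}"

end

theory Submission
  imports Defs
begin

(* A Q-filtration X splits: there are projections P_a onto subspaces V_a with
   X^{>=a} = V_a + V_{a+1} + ..., V_a orthogonal to V_b unless a + b = 0, and V_a totally
   isotropic for a <> 0.  They come from a basis of X^{>=1} adapted to the filtration
   together with an isotropic dual family.  Then lambda(s) = sum_a s^a P_a is a
   one-parameter subgroup of O_Q, and for N in E^{>=2} X the conjugate
   lambda(s) (1 + N) lambda(s)^-1 = 1 + sum_{b<a} s^(a-b) P_a N P_b
   is a polynomial curve in O_Q through 1 (at s = 0) and 1 + N (at s = 1).  The image of
   the affine line under a polynomial map is Zariski connected because the field is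
   infinite, so 1 + N lies in the identity component.  Over a finite field the same
   argument runs over the algebraic closure, after transporting the splitting. *)

lemma matrix_vector_mult_axis_expansion:
  "(M::'k::field^'n^'m) *v x = (\<Sum>i\<in>UNIV. x $ i *s (M *v axis i 1))"
  by (subst basis_expansion[of x, symmetric]) (simp add: vec.sum vector_scalar_commute)

lemma sum_matrix_vector_mult: "(\<Sum>i\<in>F. M i) *v (x::'a::comm_ring_1^'n) = (\<Sum>i\<in>F. M i *v x)"
  by (induction F rule: infinite_finite_induct) (auto simp: matrix_vector_mult_add_rdistrib)

lemma map_matrix_scale_times_vector: "map_matrix ((*) c) (M::'a::comm_ring_1^'n^'m) *v x = c *s (M *v x)"
  by (simp add: vec_eq_iff matrix_vector_mult_def sum_distrib_left mult.assoc)

lemma invertible_iff_ker_trivial: "invertible (M::'k::field^'n^'n) \<longleftrightarrow> (\<forall>x. M *v x = 0 \<longrightarrow> x = 0)"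
  by (simp add: invertible_left_inverse matrix_left_invertible_ker)

lemma invertible_mat_1_plus_nilpotent:
  fixes N :: "'k::field^'n^'n"
  assumes "mpow N m = 0"
  shows "invertible (mat 1 + N)"
proof -
  have "z = 0" if "(mat 1 + N) *v z = 0" for z
  proof -
    have Nz: "N *v z = - z"
      using that by (simp add: matrix_vector_mult_add_rdistrib eq_neg_iff_add_eq_0 add.commute)
    have "mpow N k *v z = (-1)^k *s z" for k
      by (induction k) (simp_all flip: matrix_vector_mul_assoc add: vector_scalar_commute Nz)
    from this[of m] show "z = 0" using assms by simp
  qed
  then show ?thesis
    by (simp add: invertible_iff_ker_trivial)
qed

section \<open>Quadratic forms\<close>

lemma polar_commute: "polar Q x y = polar Q y x"
  unfolding polar_def by (simp add: add.commute)

lemma add_eq_polar: "Q (x + y) = Q x + Q y + polar Q x y"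
  unfolding polar_def by simp

lemma polar_eq_if_isometry:
  assumes "\<And>x. Q (M *v x) = Q x"
  shows "polar Q (M *v x) (M *v y) = polar Q x y"
  using assms[of "x + y"] assms[of x] assms[of y]
  unfolding polar_def by (simp add: matrix_vector_right_distrib)

locale qform =
  fixes Q :: "'k::field^'n \<Rightarrow> 'k"
  assumes quadratic_form: "quadratic_form Q"
begin

lemma scale: "Q (c *s x) = c^2 * Q x"
  using quadratic_form unfolding quadratic_form_def by blast

lemma polar_add_left: "polar Q (x + y) z = polar Q x z + polar Q y z"
  using quadratic_form unfolding quadratic_form_def by blast

lemma polar_scale_left: "polar Q (c *s x) y = c * polar Q x y"
  using quadratic_form unfolding quadratic_form_def by blast

lemma polar_add_right: "polar Q z (x + y) = polar Q z x + polar Q z y"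
  using polar_add_left polar_commute by metis

lemma polar_scale_right: "polar Q y (c *s x) = c * polar Q y x"
  using polar_scale_left polar_commute by metis

lemma zero [simp]: "Q 0 = 0"
  using scale[of 0 0] by simp

lemma polar_zero_left [simp]: "polar Q 0 y = 0"
  using polar_scale_left[of 0 0 y] by simp

lemma polar_zero_right [simp]: "polar Q y 0 = 0"
  using polar_zero_left polar_commute by metis

lemma polar_neg_left: "polar Q (- x) y = - polar Q x y"
  using polar_scale_left[of "-1" x y] by (simp add: vector_smult_lneg)

lemma polar_neg_right: "polar Q y (- x) = - polar Q y x"
  using polar_neg_left polar_commute by metis

lemma polar_diff_left: "polar Q (x - y) z = polar Q x z - polar Q y z"
  using polar_add_left[of x "- y" z] by (simp add: polar_neg_left)

lemma polar_diff_right: "polar Q z (x - y) = polar Q z x - polar Q z y"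
  using polar_diff_left polar_commute by metis

lemma polar_sum_left: "polar Q (\<Sum>i\<in>F. f i) y = (\<Sum>i\<in>F. polar Q (f i) y)"
  by (induction F rule: infinite_finite_induct) (auto simp: polar_add_left)

lemma polar_sum_right: "polar Q y (\<Sum>i\<in>F. f i) = (\<Sum>i\<in>F. polar Q y (f i))"
  by (induction F rule: infinite_finite_induct) (auto simp: polar_add_right)

lemmas polar_simps =
  polar_add_left polar_add_right polar_scale_left polar_scale_right polar_diff_left polar_diff_right
  polar_neg_left polar_neg_right polar_sum_left polar_sum_right

lemma polar_self: "polar Q x x = 2 * Q x"
proof -
  have "(2::'k) *s x = x + x"
    by (simp add: vec_eq_iff)
  then have "Q (x + x) = 4 * Q x"
    using scale[of 2 x] by simp
  then show ?thesis
    using add_eq_polar[of Q x x] by (simp add: algebra_simps)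
qed

lemma neg: "Q (- x) = Q x"
  using scale[of "-1" x] by (simp add: vector_smult_lneg)

lemma diff: "Q (x - y) = Q x + Q y - polar Q x y"
  using add_eq_polar[of Q x "- y"] by (simp add: neg polar_neg_right)

lemma sum_cong:
  assumes "finite I"
    and "\<And>i. i \<in> I \<Longrightarrow> Q (w i) = Q (w' i)"
    and "\<And>i j. i \<in> I \<Longrightarrow> j \<in> I \<Longrightarrow> i \<noteq> j \<Longrightarrow> polar Q (w i) (w j) = polar Q (w' i) (w' j)"
  shows "Q (\<Sum>i\<in>I. w i) = Q (\<Sum>i\<in>I. w' i)"
  using assms
proof (induction I rule: finite_induct)
  case (insert i I)
  have "Q (\<Sum>j\<in>insert i I. w j) = Q (w i) + Q (\<Sum>j\<in>I. w j) + (\<Sum>j\<in>I. polar Q (w i) (w j))"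
    using insert.hyps by (simp add: add_eq_polar polar_sum_right)
  also have "\<dots> = Q (w' i) + Q (\<Sum>j\<in>I. w' j) + (\<Sum>j\<in>I. polar Q (w' i) (w' j))"
  proof -
    have "(\<Sum>j\<in>I. polar Q (w i) (w j)) = (\<Sum>j\<in>I. polar Q (w' i) (w' j))"
      by (rule sum.cong) (use insert in auto)
    moreover have "Q (\<Sum>j\<in>I. w j) = Q (\<Sum>j\<in>I. w' j)"
      by (rule insert.IH) (use insert.prems in auto)
    ultimately show ?thesis
      using insert.prems(1) by simp
  qed
  also have "\<dots> = Q (\<Sum>j\<in>insert i I. w' j)"
    using insert.hyps by (simp add: add_eq_polar polar_sum_right)
  finally show ?case .
qed simp

lemma polar_eq_zero_on_span:
  assumes "\<And>u. u \<in> S \<Longrightarrow> polar Q z u = 0" and "w \<in> vec.span S"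
  shows "polar Q z w = 0"
  using assms(2)
  by (induction rule: vec.span_induct_alt) (simp_all add: assms(1) polar_simps)

lemma polar_times_vector_eq_zero_if_axis:
  assumes "\<And>i j. polar Q (M *v axis i 1) (M' *v axis j 1) = 0"
  shows "polar Q (M *v x) (M' *v y) = 0"
  by (simp add: matrix_vector_mult_axis_expansion[of M x] matrix_vector_mult_axis_expansion[of M' y]
      polar_simps assms)

lemma times_vector_eq_if_axis:
  assumes "\<And>i. Q (M *v axis i 1) = Q (M' *v axis i 1)"
    and "\<And>i j. polar Q (M *v axis i 1) (M *v axis j 1) = polar Q (M' *v axis i 1) (M' *v axis j 1)"
  shows "Q (M *v x) = Q (M' *v x)"
  unfolding matrix_vector_mult_axis_expansion[of M x] matrix_vector_mult_axis_expansion[of M' x]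
  by (rule sum_cong) (simp_all add: scale polar_simps assms)

end

section \<open>Polynomial curves in the Zariski topology\<close>

definition poly_fun :: "('a::field \<Rightarrow> 'a) \<Rightarrow> bool" where
  "poly_fun f \<longleftrightarrow> (\<exists>p. \<forall>s. f s = poly p s)"

lemma poly_fun_const [intro]: "poly_fun (\<lambda>s. c)"
  unfolding poly_fun_def by (rule exI[of _ "[:c:]"]) simp

lemma poly_fun_id [intro]: "poly_fun (\<lambda>s. s)"
  unfolding poly_fun_def by (rule exI[of _ "[:0, 1:]"]) simp

lemma poly_fun_add [intro]: "poly_fun f \<Longrightarrow> poly_fun g \<Longrightarrow> poly_fun (\<lambda>s. f s + g s)"
  unfolding poly_fun_def by (metis poly_add)

lemma poly_fun_mult [intro]: "poly_fun f \<Longrightarrow> poly_fun g \<Longrightarrow> poly_fun (\<lambda>s. f s * g s)"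
  unfolding poly_fun_def by (metis poly_mult)

lemma poly_fun_power [intro]: "poly_fun f \<Longrightarrow> poly_fun (\<lambda>s. f s ^ k)"
  by (induction k) auto

lemma poly_fun_sum [intro]: "(\<And>i. i \<in> F \<Longrightarrow> poly_fun (f i)) \<Longrightarrow> poly_fun (\<lambda>s. \<Sum>i\<in>F. f i s)"
  by (induction F rule: infinite_finite_induct) auto

lemma poly_fun_if [intro]: "poly_fun f \<Longrightarrow> poly_fun g \<Longrightarrow> poly_fun (\<lambda>s. if b then f s else g s)"
  by (cases b) auto

lemma poly_fun_eq_zero_or_finite_zeros:
  assumes "poly_fun f"
  shows "(\<forall>s. f s = 0) \<or> finite {s. f s = 0}"
proof -
  obtain p where "\<And>s. f s = poly p s"
    using assms unfolding poly_fun_def by blast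
  then show ?thesis
    using poly_roots_finite[of p] by (cases "p = 0") simp_all
qed

lemma mat_polys_comp_poly_fun:
  assumes "f \<in> mat_polys" and "\<And>i j. poly_fun (\<lambda>s. c s $ i $ j)"
  shows "poly_fun (\<lambda>s. f (c s))"
  using assms(1) by (induction rule: mat_polys.induct) (auto intro: assms(2))

lemma zariski_closedin_poly_curve_preimage:
  fixes c :: "'k::field \<Rightarrow> 'k^'n^'n"
  assumes "\<And>i j. poly_fun (\<lambda>s. c s $ i $ j)" and "zariski_closedin (range c) C"
  shows "c -` C = UNIV \<or> finite (c -` C)"
proof -
  obtain F where F: "F \<subseteq> mat_polys" "C = range c \<inter> {A. \<forall>f\<in>F. f A = 0}"
    using assms(2) unfolding zariski_closedin_def by blast
  show ?thesis
  proof (cases "\<forall>f\<in>F. \<forall>s. f (c s) = 0")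
    case False
    then obtain f s0 where f: "f \<in> F" "f (c s0) \<noteq> 0"
      by blast
    have "poly_fun (\<lambda>s. f (c s))"
      using mat_polys_comp_poly_fun F(1) f(1) assms(1) by blast
    then have "finite {s. f (c s) = 0}"
      using poly_fun_eq_zero_or_finite_zeros f(2) by blast
    moreover have "c -` C \<subseteq> {s. f (c s) = 0}"
      using f(1) F(2) by blast
    ultimately show ?thesis
      using finite_subset by blast
  next
    case True
    then have "c -` C = UNIV"
      using F(2) by auto
    then show ?thesis ..
  qed
qed

lemma zariski_connected_poly_curve:
  fixes c :: "'k::field \<Rightarrow> 'k^'n^'n"
  assumes "infinite (UNIV :: 'k set)" and "\<And>i j. poly_fun (\<lambda>s. c s $ i $ j)"
  shows "zariski_connected (range c)"
  unfolding zariski_connected_def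
proof (intro notI, elim exE conjE)
  fix C1 C2
  assume closed: "zariski_closedin (range c) C1" "zariski_closedin (range c) C2"
    and disjoint: "C1 \<inter> C2 = {}" and cover: "C1 \<union> C2 = range c"
    and nonempty: "C1 \<noteq> {}" "C2 \<noteq> {}"
  have proper: "c -` C \<noteq> UNIV" if C': "C' \<noteq> {}" "C \<inter> C' = {}" "C' \<subseteq> range c" for C C'
  proof -
    obtain s where "c s \<in> C'"
      using C'(1,3) by blast
    then show ?thesis
      using C'(2) by blast
  qed
  have "c -` C1 \<noteq> UNIV" "c -` C2 \<noteq> UNIV"
    using proper[of C2 C1] proper[of C1 C2] disjoint nonempty cover by auto
  then have "finite (c -` C1 \<union> c -` C2)"
    using zariski_closedin_poly_curve_preimage[OF assms(2)] closed by blast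
  moreover have "c -` C1 \<union> c -` C2 = UNIV"
    using cover by blast
  ultimately show False
    using assms(1) by simp
qed

lemma poly_curve_in_identity_component:
  fixes c :: "'k::field \<Rightarrow> 'k^'n^'n"
  assumes "infinite (UNIV :: 'k set)" and "\<And>i j. poly_fun (\<lambda>s. c s $ i $ j)"
    and "\<And>s. c s \<in> S" and "c 0 = mat 1"
  shows "c t \<in> identity_component S"
  unfolding identity_component_def
  using assms zariski_connected_poly_curve[OF assms(1,2)] by (auto intro!: exI[of _ "range c"]) (metis rangeI)

lemma alg_closed_imp_infinite:
  assumes "alg_closed TYPE('k::field)"
  shows "infinite (UNIV :: 'k set)"
proof
  assume finite: "finite (UNIV :: 'k set)"
  define p :: "'k poly" where "p = (\<Prod>a\<in>UNIV. [:- a, 1:]) + 1"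
  have "degree (\<Prod>a\<in>(UNIV::'k set). [:- a, 1:]) = card (UNIV :: 'k set)"
    by (subst degree_prod_eq_sum_degree) auto
  moreover have "card (UNIV :: 'k set) > 0"
    using finite by (simp add: finite_UNIV_card_ge_0)
  ultimately have "degree p > 0"
    unfolding p_def by (metis degree_add_eq_left degree_1)
  then obtain x where "poly p x = 0"
    using assms unfolding alg_closed_def by blast
  moreover have "poly (\<Prod>a\<in>(UNIV::'k set). [:- a, 1:]) x = 0"
    using finite by (simp add: poly_prod prod_zero_iff)
  ultimately show False
    unfolding p_def by simp
qed

section \<open>Orthogonal gradings\<close>

locale orthogonal_grading = qform Q for Q :: "'k::field^'n \<Rightarrow> 'k" +
  fixes A :: "int set" and P :: "int \<Rightarrow> 'k^'n^'n"
  assumes finite_weights: "finite A"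
    and sum_proj: "sum P A = mat 1"
    and proj_mult: "a \<in> A \<Longrightarrow> b \<in> A \<Longrightarrow> P a ** P b = (if a = b then P a else 0)"
    and polar_proj: "a \<in> A \<Longrightarrow> b \<in> A \<Longrightarrow> a + b \<noteq> 0 \<Longrightarrow> polar Q (P a *v x) (P b *v y) = 0"
    and isotropic_proj: "a \<in> A \<Longrightarrow> a \<noteq> 0 \<Longrightarrow> Q (P a *v x) = 0"
begin

definition raises_weight :: "'k^'n^'n \<Rightarrow> bool" where
  "raises_weight N \<longleftrightarrow> (\<forall>a\<in>A. \<forall>b\<in>A. a \<le> b \<longrightarrow> P a ** N ** P b = 0)"

definition cochar :: "'k \<Rightarrow> 'k^'n \<Rightarrow> 'k^'n" where
  "cochar s x = (\<Sum>a\<in>A. (s powi a) *s (P a *v x))"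

lemma sum_proj_apply: "(\<Sum>a\<in>A. P a *v x) = x"
  using sum_proj sum_matrix_vector_mult[of P A x] by simp

lemma cochar_add: "cochar s (x + y) = cochar s x + cochar s y"
  unfolding cochar_def by (simp add: matrix_vector_right_distrib vector_add_ldistrib sum.distrib)

lemma cochar_zero [simp]: "cochar s 0 = 0"
  unfolding cochar_def by simp

lemma cochar_one [simp]: "cochar 1 x = x"
  unfolding cochar_def by (simp add: sum_proj_apply)

lemma cochar_inverse:
  assumes "s \<noteq> 0"
  shows "cochar (inverse s) (cochar s x) = x"
proof -
  have "cochar (inverse s) (cochar s x) =
      (\<Sum>a\<in>A. \<Sum>b\<in>A. (inverse s powi a * s powi b) *s ((P a ** P b) *v x))"
    unfolding cochar_def
    by (simp add: vec.sum vector_scalar_commute vec.scale_sum_right matrix_vector_mul_assoc)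
  also have "\<dots> = (\<Sum>a\<in>A. \<Sum>b\<in>A. if a = b then (inverse s powi a * s powi b) *s (P a *v x) else 0)"
    by (intro sum.cong refl) (simp add: proj_mult)
  also have "\<dots> = (\<Sum>a\<in>A. (inverse s powi a * s powi a) *s (P a *v x))"
    using finite_weights by simp
  also have "\<dots> = x"
    using assms by (simp add: power_int_inverse sum_proj_apply)
  finally show ?thesis .
qed

lemma cochar_isometry:
  assumes "s \<noteq> 0"
  shows "Q (cochar s x) = Q x"
proof -
  have "Q (\<Sum>a\<in>A. (s powi a) *s (P a *v x)) = Q (\<Sum>a\<in>A. P a *v x)"
  proof (rule sum_cong[OF finite_weights])
    fix a assume "a \<in> A"
    then show "Q ((s powi a) *s (P a *v x)) = Q (P a *v x)"
      using isotropic_proj by (cases "a = 0") (auto simp: scale)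
  next
    fix a b assume a: "a \<in> A" and b: "b \<in> A"
    show "polar Q ((s powi a) *s (P a *v x)) ((s powi b) *s (P b *v x)) = polar Q (P a *v x) (P b *v x)"
    proof (cases "a + b = 0")
      case True
      then have "s powi a * s powi b = 1"
        using assms by (simp add: power_int_minus eq_neg_iff_add_eq_0[symmetric])
      then show ?thesis
        by (simp add: polar_scale_left polar_scale_right mult.assoc[symmetric] mult.commute)
    qed (simp add: polar_proj[OF a b] polar_scale_left polar_scale_right)
  qed
  then show ?thesis
    unfolding cochar_def sum_proj_apply .
qed

(* The conjugate of 1 + N by cochar s (conj_curve_apply).  Since N raises weights, only
   positive powers of s occur, so the curve extends polynomially to s = 0 with value 1. *)
definition conj_curve :: "'k^'n^'n \<Rightarrow> 'k \<Rightarrow> 'k^'n^'n" where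
  "conj_curve N s = mat 1 +
     (\<Sum>a\<in>A. \<Sum>b\<in>A. map_matrix ((*) (if b < a then s ^ nat (a - b) else 0)) (P a ** N ** P b))"

lemma conj_curve_apply:
  assumes "raises_weight N" and "s \<noteq> 0"
  shows "conj_curve N s *v x = cochar s ((mat 1 + N) *v cochar (inverse s) x)"
proof -
  have "cochar s (N *v cochar (inverse s) x) =
      (\<Sum>a\<in>A. \<Sum>b\<in>A. (s powi a * inverse s powi b) *s ((P a ** N ** P b) *v x))"
    unfolding cochar_def
    by (simp add: vec.sum vector_scalar_commute vec.scale_sum_right matrix_vector_mul_assoc matrix_mul_assoc)
  also have "\<dots> = (\<Sum>a\<in>A. \<Sum>b\<in>A. (if b < a then s ^ nat (a - b) else 0) *s ((P a ** N ** P b) *v x))"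
  proof (intro sum.cong refl)
    fix a b assume "a \<in> A" "b \<in> A"
    show "(s powi a * inverse s powi b) *s ((P a ** N ** P b) *v x) =
        (if b < a then s ^ nat (a - b) else 0) *s ((P a ** N ** P b) *v x)"
    proof (cases "b < a")
      case True
      have "s powi a * inverse s powi b = s powi (a - b)"
        using power_int_diff[of s a b] \<open>s \<noteq> 0\<close> by (simp add: power_int_inverse divide_inverse)
      also have "\<dots> = s ^ nat (a - b)"
        using True by (simp add: power_int_def)
      finally show ?thesis
        using True by simp
    qed (use \<open>raises_weight N\<close> \<open>a \<in> A\<close> \<open>b \<in> A\<close> in \<open>simp add: raises_weight_def\<close>)
  qed
  finally have "cochar s (N *v cochar (inverse s) x) = conj_curve N s *v x - x"
    by (simp add: conj_curve_def matrix_vector_mult_add_rdistrib sum_matrix_vector_mult map_matrix_scale_times_vector)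
  moreover have "cochar s (cochar (inverse s) x) = x"
    using cochar_inverse[of "inverse s" x] \<open>s \<noteq> 0\<close> by simp
  ultimately show ?thesis
    by (simp add: matrix_vector_mult_add_rdistrib cochar_add)
qed

lemma conj_curve_zero: "conj_curve N 0 = mat 1"
proof -
  have "(if b < a then (0::'k) ^ nat (a - b) else 0) = 0" for a b :: int
    by simp
  then show ?thesis
    by (simp add: conj_curve_def vec_eq_iff map_matrix_def)
qed

lemma conj_curve_one: "raises_weight N \<Longrightarrow> conj_curve N 1 = mat 1 + N"
  by (simp add: matrix_eq conj_curve_apply)

lemma poly_fun_conj_curve: "poly_fun (\<lambda>s. conj_curve N s $ i $ j)"
proof -
  have "conj_curve N s $ i $ j = mat 1 $ i $ j +
      (\<Sum>a\<in>A. \<Sum>b\<in>A. (if b < a then s ^ nat (a - b) else 0) * (P a ** N ** P b) $ i $ j)" for s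
    by (simp add: conj_curve_def sum_component)
  then show ?thesis
    by (simp only:) (intro poly_fun_add poly_fun_sum poly_fun_mult poly_fun_if poly_fun_power poly_fun_id poly_fun_const)
qed

lemma conj_curve_in_O_Q:
  assumes "raises_weight N" and "\<And>x. Q ((mat 1 + N) *v x) = Q x" and "mpow N m = 0"
  shows "conj_curve N s \<in> O_Q Q"
proof (cases "s = 0")
  case True
  then show ?thesis
    by (simp add: O_Q_def conj_curve_zero invertible_def)
next
  case False
  have "Q (conj_curve N s *v x) = Q x" for x
    using False assms(2) by (simp add: conj_curve_apply[OF assms(1)] cochar_isometry)
  moreover have "x = 0" if "conj_curve N s *v x = 0" for x
  proof -
    have "(mat 1 + N) *v cochar (inverse s) x = 0"
      using that cochar_inverse[OF False] by (metis conj_curve_apply[OF assms(1) False] cochar_zero)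
    then have "cochar (inverse s) x = 0"
      using invertible_mat_1_plus_nilpotent[OF assms(3)] by (simp add: invertible_iff_ker_trivial)
    then show "x = 0"
      using cochar_inverse[of "inverse s" x] False by simp
  qed
  ultimately show ?thesis
    by (simp add: O_Q_def invertible_iff_ker_trivial)
qed

theorem unipotent_in_identity_component:
  assumes "infinite (UNIV :: 'k set)" and "raises_weight N"
    and "\<And>x. Q ((mat 1 + N) *v x) = Q x" and "mpow N m = 0"
  shows "mat 1 + N \<in> identity_component (O_Q Q)"
  using poly_curve_in_identity_component[OF assms(1) poly_fun_conj_curve
      conj_curve_in_O_Q[OF assms(2-4)] conj_curve_zero, of 1]
  by (simp add: conj_curve_one[OF assms(2)])

end

section \<open>Base change\<close>

locale field_hom =
  fixes \<phi> :: "'k::field \<Rightarrow> 'K::field"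
  assumes hom_one: "\<phi> 1 = 1"
    and hom_add: "\<phi> (a + b) = \<phi> a + \<phi> b"
    and hom_mult: "\<phi> (a * b) = \<phi> a * \<phi> b"
begin

lemma hom_zero [simp]: "\<phi> 0 = 0"
  using hom_add[of 0 0] by (metis add.right_neutral add_left_cancel)

lemma hom_sum: "\<phi> (\<Sum>i\<in>F. f i) = (\<Sum>i\<in>F. \<phi> (f i))"
  by (induction F rule: infinite_finite_induct) (simp_all add: hom_add)

lemma hom_power: "\<phi> (a ^ n) = \<phi> a ^ n"
  by (induction n) (simp_all add: hom_one hom_mult)

definition map_vec :: "'k^'n \<Rightarrow> 'K^'n" where
  "map_vec v = (\<chi> i. \<phi> (v $ i))"

lemma map_vec_nth [simp]: "map_vec v $ i = \<phi> (v $ i)"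
  by (simp add: map_vec_def)

lemma map_vec_axis [simp]: "map_vec (axis i 1) = axis i 1"
  by (simp add: vec_eq_iff axis_def hom_one)

lemma map_vec_zero: "map_vec 0 = 0"
  by (simp add: vec_eq_iff)

lemma map_vec_add: "map_vec (x + y) = map_vec x + map_vec y"
  by (simp add: vec_eq_iff hom_add)

lemma map_vec_scale: "map_vec (c *s x) = \<phi> c *s map_vec x"
  by (simp add: vec_eq_iff hom_mult)

lemma map_matrix_times_vector: "map_matrix \<phi> M *v map_vec v = map_vec (M *v v)"
  by (simp add: vec_eq_iff matrix_vector_mult_def hom_sum hom_mult)

lemma map_matrix_times_axis: "map_matrix \<phi> M *v axis i 1 = map_vec (M *v axis i 1)"
  by (metis map_matrix_times_vector map_vec_axis)

lemma map_matrix_mult: "map_matrix \<phi> (A ** B) = map_matrix \<phi> A ** map_matrix \<phi> B"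
  by (simp add: vec_eq_iff matrix_matrix_mult_def hom_sum hom_mult)

lemma map_matrix_add: "map_matrix \<phi> (A + B) = map_matrix \<phi> A + map_matrix \<phi> B"
  by (simp add: vec_eq_iff hom_add)

lemma map_matrix_zero [simp]: "map_matrix \<phi> 0 = 0"
  by (simp add: vec_eq_iff)

lemma map_matrix_mat_1 [simp]: "map_matrix \<phi> (mat 1) = mat 1"
  by (simp add: vec_eq_iff mat_def hom_one)

lemma map_matrix_sum: "map_matrix \<phi> (\<Sum>a\<in>F. M a) = (\<Sum>a\<in>F. map_matrix \<phi> (M a))"
  by (simp add: vec_eq_iff hom_sum sum_component)

lemma map_matrix_mpow: "mpow (map_matrix \<phi> N) m = map_matrix \<phi> (mpow N m)"
  by (induction m) (simp_all add: map_matrix_mult)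

context
  fixes Q :: "'k^'n \<Rightarrow> 'k" and Qt :: "'K^'n \<Rightarrow> 'K"
  assumes Q: "qform Q" and extends: "extends_qf \<phi> Q Qt"
begin

interpretation Q: qform Q
  by (fact Q)

interpretation Qt: qform Qt
  using extends by (simp add: extends_qf_def qform_def)

lemma polar_map_vec_axis: "polar Qt (map_vec v) (axis j 1) = \<phi> (polar Q v (axis j 1))"
proof -
  have "polar Qt (map_vec v) (axis j 1) = polar Qt (\<Sum>i\<in>UNIV. \<phi> (v $ i) *s axis i 1) (axis j 1)"
    using basis_expansion[of "map_vec v"] by simp
  also have "\<dots> = (\<Sum>i\<in>UNIV. \<phi> (v $ i) * \<phi> (polar Q (axis i 1) (axis j 1)))"
    using extends by (simp add: Qt.polar_simps extends_qf_def)
  also have "\<dots> = \<phi> (polar Q (\<Sum>i\<in>UNIV. v $ i *s axis i 1) (axis j 1))"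
    by (simp add: Q.polar_simps hom_sum hom_mult)
  finally show ?thesis
    by (simp only: basis_expansion)
qed

lemma polar_map_vec: "polar Qt (map_vec v) (map_vec w) = \<phi> (polar Q v w)"
proof -
  have "polar Qt (map_vec v) (map_vec w) = (\<Sum>j\<in>UNIV. \<phi> (w $ j) * \<phi> (polar Q v (axis j 1)))"
    by (subst basis_expansion[of "map_vec w", symmetric]) (simp add: Qt.polar_simps polar_map_vec_axis)
  also have "\<dots> = \<phi> (polar Q v w)"
    by (subst (2) basis_expansion[of w, symmetric]) (simp add: Q.polar_simps hom_sum hom_mult)
  finally show ?thesis .
qed

lemma value_map_vec: "Qt (map_vec v) = \<phi> (Q v)"
proof -
  have "v \<in> vec.span cart_basis"
    by simp
  then show ?thesis
  proof (induction rule: vec.span_induct_alt)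
    case base
    show ?case
      by (simp add: map_vec_zero)
  next
    case (step c e y)
    then obtain i where e: "e = axis i 1"
      unfolding cart_basis_def by blast
    have "Qt (map_vec (c *s e + y)) = \<phi> c ^ 2 * Qt (axis i 1) + Qt (map_vec y) + \<phi> c * polar Qt (map_vec e) (map_vec y)"
      by (simp add: map_vec_add map_vec_scale e add_eq_polar Qt.scale Qt.polar_simps)
    also have "\<dots> = \<phi> (c ^ 2 * Q e + Q y + c * polar Q e y)"
      using step.IH extends polar_map_vec[of e y] by (simp add: e extends_qf_def hom_add hom_mult hom_power)
    also have "c ^ 2 * Q e + Q y + c * polar Q e y = Q (c *s e + y)"
      by (simp add: add_eq_polar Q.scale Q.polar_simps)
    finally show ?case .
  qed
qed

lemma isometry_map_matrix:
  assumes "\<And>x. Q (M *v x) = Q x"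
  shows "Qt (map_matrix \<phi> M *v x) = Qt x"
proof -
  have "Qt (map_matrix \<phi> M *v x) = Qt (mat 1 *v x)"
  proof (rule Qt.times_vector_eq_if_axis)
    fix i j
    show "Qt (map_matrix \<phi> M *v axis i 1) = Qt (mat 1 *v axis i 1)"
      using value_map_vec[of "M *v axis i 1"] value_map_vec[of "axis i 1"] assms
      by (simp add: map_matrix_times_axis)
    show "polar Qt (map_matrix \<phi> M *v axis i 1) (map_matrix \<phi> M *v axis j 1) =
        polar Qt (mat 1 *v axis i 1) (mat 1 *v axis j 1)"
      using polar_map_vec[of "M *v axis i 1" "M *v axis j 1"] polar_map_vec[of "axis i 1" "axis j 1"]
        polar_eq_if_isometry[of Q M, OF assms]
      by (simp add: map_matrix_times_axis)
  qed
  then show ?thesis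
    by simp
qed

lemma orthogonal_grading_map_matrix:
  assumes "orthogonal_grading Q A P"
  shows "orthogonal_grading Qt A (\<lambda>a. map_matrix \<phi> (P a))"
proof -
  interpret orthogonal_grading Q A P
    by (fact assms)
  show ?thesis
  proof
    show "finite A" "(\<Sum>a\<in>A. map_matrix \<phi> (P a)) = mat 1"
      by (simp_all add: finite_weights sum_proj flip: map_matrix_sum)
    show "map_matrix \<phi> (P a) ** map_matrix \<phi> (P b) = (if a = b then map_matrix \<phi> (P a) else 0)"
      if "a \<in> A" "b \<in> A" for a b
      using proj_mult[OF that] by (simp flip: map_matrix_mult)
    show "polar Qt (map_matrix \<phi> (P a) *v x) (map_matrix \<phi> (P b) *v y) = 0"
      if "a \<in> A" "b \<in> A" "a + b \<noteq> 0" for a b x y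
      by (rule Qt.polar_times_vector_eq_zero_if_axis)
        (simp add: map_matrix_times_axis polar_map_vec polar_proj[OF that])
    show "Qt (map_matrix \<phi> (P a) *v x) = 0" if "a \<in> A" "a \<noteq> 0" for a x
      using Qt.times_vector_eq_if_axis[of "map_matrix \<phi> (P a)" 0 x]
      by (simp add: map_matrix_times_axis value_map_vec polar_map_vec isotropic_proj[OF that]
          polar_proj[OF that(1,1)] that(2))
  qed
qed

end

end

lemma (in orthogonal_grading) base_change_unipotent_in_identity_component:
  fixes \<phi> :: "'k \<Rightarrow> 'K::field"
  assumes "field_hom \<phi>" and "extends_qf \<phi> Q Qt" and "infinite (UNIV :: 'K set)"
    and "raises_weight N" and "\<And>x. Q ((mat 1 + N) *v x) = Q x" and "mpow N m = 0"
  shows "map_matrix \<phi> (mat 1 + N) \<in> identity_component (O_Q Qt)"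
proof -
  interpret field_hom \<phi>
    by (fact assms(1))
  interpret Qt: orthogonal_grading Qt A "\<lambda>a. map_matrix \<phi> (P a)"
    using orthogonal_grading_map_matrix[OF qform_axioms assms(2)] orthogonal_grading_axioms by blast
  have "Qt.raises_weight (map_matrix \<phi> N)"
    using assms(4) by (simp add: raises_weight_def Qt.raises_weight_def flip: map_matrix_mult)
  moreover have "Qt ((mat 1 + map_matrix \<phi> N) *v x) = Qt x" for x
    using isometry_map_matrix[OF qform_axioms assms(2), of "mat 1 + N"] assms(5)
    by (simp add: map_matrix_add)
  moreover have "mpow (map_matrix \<phi> N) m = 0"
    using assms(6) by (simp add: map_matrix_mpow)
  ultimately show ?thesis
    using Qt.unipotent_in_identity_component[OF assms(3)] by (simp add: map_matrix_add)
qed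

section \<open>Isotropic dual families\<close>

definition isotropic_dual :: "('k::field^'n \<Rightarrow> 'k) \<Rightarrow> ('k^'n) set \<Rightarrow> ('k^'n \<Rightarrow> 'k^'n) \<Rightarrow> bool" where
  "isotropic_dual Q U du \<longleftrightarrow>
     (\<forall>u\<in>U. \<forall>v\<in>U. polar Q v (du u) = (if v = u then 1 else 0)) \<and>
     (\<forall>u\<in>U. Q (du u) = 0) \<and> (\<forall>u\<in>U. \<forall>v\<in>U. polar Q (du u) (du v) = 0)"

lemma polar_eq_zero_on_isotropic_subspace:
  assumes "vec.subspace W" and "\<forall>w\<in>W. Q w = 0" and "x \<in> W" and "y \<in> W"
  shows "polar Q x y = 0"
  using assms vec.subspace_add[OF assms(1,3,4)] unfolding polar_def by simp

context qform
begin

lemma isotropic_radical_eq_zero: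
  assumes "nondegenerate Q" and "\<And>y. polar Q w y = 0" and "Q w = 0"
  shows "w = 0"
proof -
  have "w \<in> radical Q" "0 \<in> radical Q"
    unfolding radical_def using assms(2) by auto
  then show ?thesis
    using assms(1,3) unfolding nondegenerate_def inj_on_def by simp
qed

lemma exists_dual_vector:
  assumes "nondegenerate Q" and "vec.subspace W" and "\<forall>w\<in>W. Q w = 0"
    and "finite F" and "F \<subseteq> W" and "x \<in> W" and "x \<notin> vec.span F"
    and "\<And>u v. u \<in> F \<Longrightarrow> v \<in> F \<Longrightarrow> polar Q v (du u) = (if v = u then 1 else 0)"
  obtains y where "\<And>v. v \<in> F \<Longrightarrow> polar Q v y = 0" and "polar Q x y = 1"
proof -
  define w where "w = x - (\<Sum>v\<in>F. polar Q x (du v) *s v)"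
  have "w \<in> W"
    unfolding w_def using assms(2,5,6)
    by (intro vec.subspace_diff vec.subspace_sum vec.subspace_scale) auto
  moreover have "(\<Sum>v\<in>F. polar Q x (du v) *s v) \<in> vec.span F"
    by (intro vec.span_sum vec.span_scale vec.span_base)
  then have "w \<noteq> 0"
    unfolding w_def using assms(7) by auto
  ultimately obtain z where z: "polar Q w z \<noteq> 0"
    using isotropic_radical_eq_zero[OF assms(1)] assms(3) by blast
  define y where "y = inverse (polar Q w z) *s (z - (\<Sum>u\<in>F. polar Q u z *s du u))"
  show thesis
  proof
    fix v assume "v \<in> F"
    then have "(\<Sum>u\<in>F. polar Q u z * polar Q v (du u)) = (\<Sum>u\<in>F. if u = v then polar Q u z else 0)"
      using assms(8) by (intro sum.cong) auto
    also have "\<dots> = polar Q v z"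
      using assms(4) \<open>v \<in> F\<close> by simp
    finally show "polar Q v y = 0"
      unfolding y_def by (simp add: polar_simps)
  next
    have xz: "polar Q x (z - (\<Sum>u\<in>F. polar Q u z *s du u)) = polar Q w z"
      unfolding w_def by (simp add: polar_simps polar_commute[of Q _ z] mult.commute)
    then show "polar Q x y = 1"
      using z unfolding y_def polar_scale_right xz by simp
  qed
qed

lemma exists_isotropic_partner:
  assumes "vec.subspace W" and "\<forall>w\<in>W. Q w = 0" and "finite F" and "F \<subseteq> W" and "x \<in> W"
    and "isotropic_dual Q F du"
    and "\<And>v. v \<in> F \<Longrightarrow> polar Q v y0 = 0" and "polar Q x y0 = 1"
  obtains y where "\<And>v. v \<in> F \<Longrightarrow> polar Q v y = 0" and "polar Q x y = 1"
    and "\<And>v. v \<in> F \<Longrightarrow> polar Q (du v) y = 0" and "Q y = 0"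
proof -
  have W: "polar Q u v = 0" if "u \<in> W" "v \<in> W" for u v
    using polar_eq_zero_on_isotropic_subspace[OF assms(1,2) that] .
  have dual: "polar Q (du u) v = (if v = u then 1 else 0)" if "u \<in> F" "v \<in> F" for u v
    using assms(6) that polar_commute[of Q "du u" v] unfolding isotropic_dual_def by simp
  \<comment> \<open>Subtracting a multiple of x makes y0 isotropic; subtracting s then removes the
    pairings with the dual vectors, without disturbing the other properties since W is
    totally isotropic.\<close>
  define y1 where "y1 = y0 - Q y0 *s x"
  have y1_F: "polar Q v y1 = 0" if "v \<in> F" for v
    unfolding y1_def using assms(4,5,7) that W by (auto simp: polar_simps)
  have y1_x: "polar Q x y1 = 1"
    unfolding y1_def using assms(5,8) W by (simp add: polar_simps)
  have "Q y1 = 0"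
    unfolding y1_def using assms(2,5,8) polar_commute[of Q y0 x] by (simp add: diff scale polar_simps)
  define s where "s = (\<Sum>v\<in>F. polar Q (du v) y1 *s v)"
  have "s \<in> W"
    unfolding s_def using assms(1,4) by (intro vec.subspace_sum vec.subspace_scale) auto
  have "polar Q y1 s = 0"
    unfolding s_def using y1_F polar_commute[of Q y1] by (simp add: polar_simps)
  show thesis
  proof
    fix v assume "v \<in> F"
    then show "polar Q v (y1 - s) = 0"
      using y1_F W \<open>s \<in> W\<close> assms(4) by (auto simp: polar_simps)
    have "polar Q (du v) s = (\<Sum>u\<in>F. if u = v then polar Q (du u) y1 else 0)"
      unfolding s_def using dual \<open>v \<in> F\<close> by (auto simp: polar_simps intro: sum.cong)
    then show "polar Q (du v) (y1 - s) = 0"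
      using assms(3) \<open>v \<in> F\<close> by (simp add: polar_simps)
  next
    show "polar Q x (y1 - s) = 1"
      using y1_x W \<open>s \<in> W\<close> assms(5) by (simp add: polar_simps)
    show "Q (y1 - s) = 0"
      using \<open>Q y1 = 0\<close> \<open>polar Q y1 s = 0\<close> \<open>s \<in> W\<close> assms(2) by (simp add: diff)
  qed
qed

lemma isotropic_dual_exists:
  assumes "nondegenerate Q" and "vec.subspace W" and "\<forall>w\<in>W. Q w = 0"
    and "finite U" and "vec.independent U" and "U \<subseteq> W"
  shows "\<exists>du. isotropic_dual Q U du"
  using assms(4-6)
proof (induction U rule: finite_induct)
  case empty
  then show ?case
    by (simp add: isotropic_dual_def)
next
  case (insert x F)
  then have "x \<notin> vec.span F" "vec.independent F" "F \<subseteq> W" "x \<in> W"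
    using vec.independent_insert[of x F] by auto
  with insert.IH obtain du where du: "isotropic_dual Q F du"
    by blast
  obtain y0 where "\<And>v. v \<in> F \<Longrightarrow> polar Q v y0 = 0" "polar Q x y0 = 1"
    using exists_dual_vector[OF assms(1-3) insert.hyps(1) \<open>F \<subseteq> W\<close> \<open>x \<in> W\<close> \<open>x \<notin> vec.span F\<close>] du
    unfolding isotropic_dual_def by blast
  then obtain y where y: "\<And>v. v \<in> F \<Longrightarrow> polar Q v y = 0" "polar Q x y = 1"
      "\<And>v. v \<in> F \<Longrightarrow> polar Q (du v) y = 0" "Q y = 0"
    using exists_isotropic_partner[OF assms(2,3) insert.hyps(1) \<open>F \<subseteq> W\<close> \<open>x \<in> W\<close> du] by blast
  have y_du: "polar Q y (du v) = 0" if "v \<in> F" for v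
    using y(3)[OF that] polar_commute[of Q y] by simp
  have y_y: "polar Q y y = 0"
    using y(4) by (simp add: polar_self)
  have x_F: "polar Q x v = 0" "polar Q v x = 0" if "v \<in> F" for v
    using polar_eq_zero_on_isotropic_subspace[OF assms(2,3)] that \<open>F \<subseteq> W\<close> \<open>x \<in> W\<close> by auto
  define du' where "du' u = (if u = x then y else du u - polar Q x (du u) *s y)" for u
  have "isotropic_dual Q (insert x F) du'"
    using du insert.hyps(2) y y_du y_y x_F
    unfolding isotropic_dual_def du'_def by (auto simp: polar_simps diff scale)
  then show ?case
    by blast
qed

end

section \<open>Splitting a Q-filtration\<close>

lemma Q_filtration_subspace: "Q_filtration Q X \<Longrightarrow> vec.subspace (X a)"
  unfolding Q_filtration_def lin_subspace_def vec.subspace_def by simp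

lemma Q_filtration_antimono: "Q_filtration Q X \<Longrightarrow> a \<le> b \<Longrightarrow> X b \<subseteq> X a"
  unfolding Q_filtration_def by simp

lemma Q_filtration_isotropic: "Q_filtration Q X \<Longrightarrow> 1 \<le> a \<Longrightarrow> x \<in> X a \<Longrightarrow> Q x = 0"
  unfolding Q_filtration_def by simp

lemma Q_filtration_perp: "Q_filtration Q X \<Longrightarrow> 1 \<le> a \<Longrightarrow> X (1 - a) = perp Q (X a)"
  unfolding Q_filtration_def by simp

lemma Q_filtration_vanishes:
  assumes "Q_filtration Q X"
  obtains a0 where "1 \<le> a0" and "\<And>a. a0 \<le> a \<Longrightarrow> X a = {0}"
proof -
  have "\<exists>a0. \<forall>a\<ge>a0. X a = {0}"
    using assms unfolding Q_filtration_def by (elim conjE)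
  then obtain a0 where "\<And>a. a0 \<le> a \<Longrightarrow> X a = {0}"
    by blast
  then show thesis
    by (intro that[of "max a0 1"]) simp_all
qed

lemma Q_filtration_adapted_basis:
  assumes "Q_filtration Q X"
  obtains U where "vec.independent U" and "U \<subseteq> X 1"
    and "\<And>a. 1 \<le> a \<Longrightarrow> X a \<subseteq> vec.span (U \<inter> X a)"
proof -
  obtain a0 where "1 \<le> a0" and top: "\<And>a. a0 \<le> a \<Longrightarrow> X a = {0}"
    using Q_filtration_vanishes[OF assms] by blast
  have "\<exists>U. vec.independent U \<and> U \<subseteq> X (a0 - int j) \<and>
      (\<forall>a \<ge> a0 - int j. X a \<subseteq> vec.span (U \<inter> X a))" for j
  proof (induction j)
    case 0
    then show ?case
      using top by (intro exI[of _ "{}"]) (auto simp: vec.independent_empty)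
  next
    case (Suc j)
    let ?m = "a0 - int (Suc j)"
    obtain U where U: "vec.independent U" "U \<subseteq> X (a0 - int j)"
      "\<And>a. a0 - int j \<le> a \<Longrightarrow> X a \<subseteq> vec.span (U \<inter> X a)"
      using Suc.IH by blast
    have "U \<subseteq> X ?m"
      using U(2) Q_filtration_antimono[OF assms, of ?m "a0 - int j"] by auto
    then obtain U' where U': "U \<subseteq> U'" "U' \<subseteq> X ?m" "vec.independent U'" "X ?m \<subseteq> vec.span U'"
      using vec.maximal_independent_subset_extend[of U "X ?m"] U(1) by blast
    have "X a \<subseteq> vec.span (U' \<inter> X a)" if "?m \<le> a" for a
    proof (cases "a = ?m")
      case True
      then show ?thesis
        using U'(2,4) by (simp add: Int_absorb2)
    next
      case False
      then have "X a \<subseteq> vec.span (U \<inter> X a)"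
        using U(3) that by simp
      also have "\<dots> \<subseteq> vec.span (U' \<inter> X a)"
        using U'(1) by (intro vec.span_mono) blast
      finally show ?thesis .
    qed
    then show ?case
      using U' by blast
  qed
  from this[of "nat (a0 - 1)"] show thesis
    using that \<open>1 \<le> a0\<close> by auto
qed

lemma Q_filtration_degree:
  assumes "Q_filtration Q X" and "x \<in> X 1" and "x \<noteq> 0"
  obtains d where "1 \<le> d" and "\<And>c. x \<in> X c \<longleftrightarrow> c \<le> d"
proof -
  obtain a0 where "1 \<le> a0" and top: "\<And>a. a0 \<le> a \<Longrightarrow> X a = {0}"
    using Q_filtration_vanishes[OF assms(1)] by blast
  define T where "T = {a \<in> {1..a0}. x \<in> X a}"
  have "finite T"
    unfolding T_def by (rule finite_subset[of _ "{1..a0}"]) auto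
  have "1 \<in> T"
    using assms(2) \<open>1 \<le> a0\<close> unfolding T_def by auto
  have "x \<in> X c \<longleftrightarrow> c \<le> Max T" for c
  proof
    assume "x \<in> X c"
    then have "c < a0"
      using top[of c] assms(3) by force
    show "c \<le> Max T"
    proof (cases "1 \<le> c")
      case True
      then show ?thesis
        using \<open>x \<in> X c\<close> \<open>c < a0\<close> \<open>finite T\<close> unfolding T_def by simp
    next
      case False
      then show ?thesis
        using Max_ge[OF \<open>finite T\<close> \<open>1 \<in> T\<close>] by simp
    qed
  next
    assume "c \<le> Max T"
    moreover have "x \<in> X (Max T)"
      using Max_in[OF \<open>finite T\<close>] \<open>1 \<in> T\<close> unfolding T_def by blast
    ultimately show "x \<in> X c"
      using Q_filtration_antimono[OF assms(1)] by blast
  qed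
  then show thesis
    using that Max_ge[OF \<open>finite T\<close> \<open>1 \<in> T\<close>] by blast
qed

(* The weight-a piece of the splitting is spanned by the u with
   d u = a for a > 0, by the du u with d u = -a for a < 0, and for a = 0 it is the
   orthogonal complement of U and du ` U. *)
locale adapted_frame = qform Q for Q :: "'k::field^'n \<Rightarrow> 'k" +
  fixes X :: "int \<Rightarrow> ('k^'n) set" and U :: "('k^'n) set"
    and du :: "'k^'n \<Rightarrow> 'k^'n" and d :: "'k^'n \<Rightarrow> int"
  assumes filtration: "Q_filtration Q X"
    and finite_basis: "finite U"
    and basis_subset: "U \<subseteq> X 1"
    and basis_spans: "\<And>a. 1 \<le> a \<Longrightarrow> X a \<subseteq> vec.span (U \<inter> X a)"
    and isotropic_dual: "isotropic_dual Q U du"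
    and degree: "\<And>u c. u \<in> U \<Longrightarrow> u \<in> X c \<longleftrightarrow> c \<le> d u"
    and degree_pos: "\<And>u. u \<in> U \<Longrightarrow> 1 \<le> d u"
begin

lemma polar_basis_dual: "u \<in> U \<Longrightarrow> v \<in> U \<Longrightarrow> polar Q v (du u) = (if v = u then 1 else 0)"
  using isotropic_dual unfolding isotropic_dual_def by blast

lemma polar_dual_basis: "u \<in> U \<Longrightarrow> v \<in> U \<Longrightarrow> polar Q (du u) v = (if v = u then 1 else 0)"
  using polar_basis_dual polar_commute by metis

lemma isotropic_dual_vector: "u \<in> U \<Longrightarrow> Q (du u) = 0"
  using isotropic_dual unfolding isotropic_dual_def by blast

lemma polar_dual_dual: "u \<in> U \<Longrightarrow> v \<in> U \<Longrightarrow> polar Q (du u) (du v) = 0"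
  using isotropic_dual unfolding isotropic_dual_def by blast

lemma polar_eq_zero_on_filtration_1: "x \<in> X 1 \<Longrightarrow> y \<in> X 1 \<Longrightarrow> polar Q x y = 0"
  using polar_eq_zero_on_isotropic_subspace[OF Q_filtration_subspace[OF filtration]]
    Q_filtration_isotropic[OF filtration] by blast

lemma polar_basis_basis: "u \<in> U \<Longrightarrow> v \<in> U \<Longrightarrow> polar Q u v = 0"
  using polar_eq_zero_on_filtration_1 basis_subset by blast

definition frame_comb :: "('k^'n \<Rightarrow> 'k) \<Rightarrow> ('k^'n \<Rightarrow> 'k) \<Rightarrow> 'k^'n" where
  "frame_comb f g = (\<Sum>u\<in>U. f u *s u + g u *s du u)"

lemma frame_comb_cong:
  "(\<And>u. u \<in> U \<Longrightarrow> f u = f' u) \<Longrightarrow> (\<And>u. u \<in> U \<Longrightarrow> g u = g' u) \<Longrightarrow> frame_comb f g = frame_comb f' g'"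
  unfolding frame_comb_def by (rule sum.cong) auto

lemma frame_comb_zero: "frame_comb (\<lambda>u. 0) (\<lambda>u. 0) = 0"
  unfolding frame_comb_def by simp

lemma frame_comb_add: "frame_comb (\<lambda>u. f u + f' u) (\<lambda>u. g u + g' u) = frame_comb f g + frame_comb f' g'"
  unfolding frame_comb_def by (simp add: sum.distrib vector_sadd_rdistrib algebra_simps)

lemma frame_comb_scale: "frame_comb (\<lambda>u. c * f u) (\<lambda>u. c * g u) = c *s frame_comb f g"
  unfolding frame_comb_def by (simp add: vec.scale_sum_right vector_add_ldistrib)

lemma frame_comb_sum:
  "finite A \<Longrightarrow> (\<Sum>a\<in>A. frame_comb (f a) (g a)) = frame_comb (\<lambda>u. \<Sum>a\<in>A. f a u) (\<lambda>u. \<Sum>a\<in>A. g a u)"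
  by (induction A rule: finite_induct) (simp_all add: frame_comb_zero frame_comb_add)

lemma polar_frame_comb: "polar Q y (frame_comb f g) = (\<Sum>u\<in>U. f u * polar Q y u + g u * polar Q y (du u))"
  unfolding frame_comb_def by (simp add: polar_simps)

lemma polar_frame_comb_dual:
  assumes "v \<in> U"
  shows "polar Q (frame_comb f g) (du v) = f v"
proof -
  have "polar Q (frame_comb f g) (du v) = (\<Sum>u\<in>U. f u * polar Q u (du v) + g u * polar Q (du u) (du v))"
    unfolding frame_comb_def by (simp add: polar_simps)
  also have "\<dots> = (\<Sum>u\<in>U. if u = v then f u else 0)"
    by (rule sum.cong) (use assms polar_basis_dual polar_dual_dual in auto)
  finally show ?thesis
    using finite_basis assms by simp
qed

lemma polar_frame_comb_basis:
  assumes "v \<in> U"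
  shows "polar Q (frame_comb f g) v = g v"
proof -
  have "polar Q (frame_comb f g) v = (\<Sum>u\<in>U. f u * polar Q u v + g u * polar Q (du u) v)"
    unfolding frame_comb_def by (simp add: polar_simps)
  also have "\<dots> = (\<Sum>u\<in>U. if u = v then g u else 0)"
    by (rule sum.cong) (use assms polar_dual_basis polar_basis_basis in auto)
  finally show ?thesis
    using finite_basis assms by simp
qed

lemma isotropic_frame_comb_basis: "Q (frame_comb f (\<lambda>u. 0)) = 0"
proof -
  have "Q (frame_comb f (\<lambda>u. 0)) = Q (\<Sum>u\<in>U. 0)"
    unfolding frame_comb_def using finite_basis
    by (rule sum_cong) (use basis_subset Q_filtration_isotropic[OF filtration] in
        \<open>auto simp: scale polar_simps polar_basis_basis\<close>)
  then show ?thesis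
    by simp
qed

lemma isotropic_frame_comb_dual: "Q (frame_comb (\<lambda>u. 0) g) = 0"
proof -
  have "Q (frame_comb (\<lambda>u. 0) g) = Q (\<Sum>u\<in>U. 0)"
    unfolding frame_comb_def using finite_basis
    by (rule sum_cong) (auto simp: scale polar_simps isotropic_dual_vector polar_dual_dual)
  then show ?thesis
    by simp
qed

definition hyperbolic_part :: "'k^'n \<Rightarrow> 'k^'n" where
  "hyperbolic_part x = frame_comb (\<lambda>u. polar Q x (du u)) (\<lambda>u. polar Q x u)"

definition weight_proj :: "int \<Rightarrow> 'k^'n \<Rightarrow> 'k^'n" where
  "weight_proj a x =
     (if a = 0 then x - hyperbolic_part x
      else frame_comb (\<lambda>u. if d u = a then polar Q x (du u) else 0) (\<lambda>u. if d u = - a then polar Q x u else 0))"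

definition weights :: "int set" where
  "weights = insert 0 (d ` U \<union> (\<lambda>u. - d u) ` U)"

lemma hyperbolic_part_frame_comb: "hyperbolic_part (frame_comb f g) = frame_comb f g"
  unfolding hyperbolic_part_def by (rule frame_comb_cong) (simp_all add: polar_frame_comb_dual polar_frame_comb_basis)

lemma hyperbolic_part_add: "hyperbolic_part (x + y) = hyperbolic_part x + hyperbolic_part y"
  unfolding hyperbolic_part_def frame_comb_add[symmetric] by (rule frame_comb_cong) (simp_all add: polar_simps)

lemma hyperbolic_part_scale: "hyperbolic_part (c *s x) = c *s hyperbolic_part x"
  unfolding hyperbolic_part_def frame_comb_scale[symmetric] by (rule frame_comb_cong) (simp_all add: polar_simps)

lemma hyperbolic_part_span_basis:
  assumes "x \<in> vec.span U"
  shows "hyperbolic_part x = x"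
  using assms
proof (induction rule: vec.span_induct_alt)
  case base
  show ?case
    using hyperbolic_part_scale[of 0 0] by simp
next
  case (step c u y)
  have "frame_comb (\<lambda>v. if v = u then 1 else 0) (\<lambda>v. 0) = (\<Sum>v\<in>U. if v = u then v else 0)"
    unfolding frame_comb_def by (rule sum.cong) auto
  also have "\<dots> = u"
    using step.hyps finite_basis by simp
  finally have "hyperbolic_part u = u"
    by (metis hyperbolic_part_frame_comb)
  then show ?case
    using step.IH by (simp add: hyperbolic_part_add hyperbolic_part_scale)
qed

lemma polar_weight_proj_dual:
  "v \<in> U \<Longrightarrow> polar Q (weight_proj a x) (du v) = (if d v = a then polar Q x (du v) else 0)"
  using degree_pos[of v]
  by (simp add: weight_proj_def hyperbolic_part_def polar_simps polar_frame_comb_dual)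

lemma polar_weight_proj_basis:
  "v \<in> U \<Longrightarrow> polar Q (weight_proj a x) v = (if d v = - a then polar Q x v else 0)"
  using degree_pos[of v]
  by (simp add: weight_proj_def hyperbolic_part_def polar_simps polar_frame_comb_basis)

lemma weight_proj_weight_proj: "weight_proj a (weight_proj b x) = (if a = b then weight_proj a x else 0)"
proof (cases "a = 0")
  case False
  then have "weight_proj a (weight_proj b x) =
      frame_comb (\<lambda>u. if d u = a then polar Q (weight_proj b x) (du u) else 0)
        (\<lambda>u. if d u = - a then polar Q (weight_proj b x) u else 0)"
    by (simp add: weight_proj_def[of a])
  also have "\<dots> = frame_comb (\<lambda>u. if a = b \<and> d u = a then polar Q x (du u) else 0)
        (\<lambda>u. if a = b \<and> d u = - a then polar Q x u else 0)"
    by (rule frame_comb_cong) (auto simp: polar_weight_proj_dual polar_weight_proj_basis)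
  also have "\<dots> = (if a = b then weight_proj a x else 0)"
    using False by (simp add: weight_proj_def frame_comb_zero)
  finally show ?thesis .
next
  case True
  have "hyperbolic_part (weight_proj b x) =
      frame_comb (\<lambda>u. if d u = b then polar Q x (du u) else 0) (\<lambda>u. if d u = - b then polar Q x u else 0)"
    unfolding hyperbolic_part_def by (rule frame_comb_cong) (simp_all add: polar_weight_proj_dual polar_weight_proj_basis)
  also have "\<dots> = (if b = 0 then frame_comb (\<lambda>u. 0) (\<lambda>u. 0) else weight_proj b x)"
    by (auto simp: weight_proj_def dest: degree_pos intro!: frame_comb_cong)
  finally show ?thesis
    using True by (simp add: weight_proj_def[of 0] frame_comb_zero)
qed

lemma finite_weights: "finite weights"
  unfolding weights_def using finite_basis by simp

lemma sum_weight_proj: "(\<Sum>a\<in>weights. weight_proj a x) = x"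
proof -
  have finite: "finite (weights - {0})"
    using finite_weights by simp
  have "(\<Sum>a\<in>weights - {0}. weight_proj a x) =
      frame_comb (\<lambda>u. \<Sum>a\<in>weights - {0}. if d u = a then polar Q x (du u) else 0)
        (\<lambda>u. \<Sum>a\<in>weights - {0}. if d u = - a then polar Q x u else 0)"
    by (simp add: weight_proj_def frame_comb_sum[OF finite])
  also have "\<dots> = hyperbolic_part x"
    unfolding hyperbolic_part_def
  proof (rule frame_comb_cong)
    fix u assume "u \<in> U"
    then have "d u \<in> weights - {0}" "- d u \<in> weights - {0}"
      using degree_pos[of u] by (auto simp: weights_def)
    moreover have "(d u = - a) = (- d u = a)" for a
      by auto
    ultimately show "(\<Sum>a\<in>weights - {0}. if d u = a then polar Q x (du u) else 0) = polar Q x (du u)"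
      "(\<Sum>a\<in>weights - {0}. if d u = - a then polar Q x u else 0) = polar Q x u"
      using finite by (simp_all add: sum.delta')
  qed
  moreover have "(\<Sum>a\<in>weights. weight_proj a x) = weight_proj 0 x + (\<Sum>a\<in>weights - {0}. weight_proj a x)"
    using sum.remove[OF finite_weights, of 0] by (simp add: weights_def)
  ultimately show ?thesis
    by (simp add: weight_proj_def)
qed

lemma weight_proj_nonzero:
  "a \<noteq> 0 \<Longrightarrow> weight_proj a x =
     frame_comb (\<lambda>u. if d u = a then polar Q x (du u) else 0) (\<lambda>u. if d u = - a then polar Q x u else 0)"
  by (simp add: weight_proj_def)

lemma polar_weight_proj:
  assumes "a + b \<noteq> 0"
  shows "polar Q (weight_proj a x) (weight_proj b y) = 0"
proof -
  have *: "polar Q (weight_proj a x) (weight_proj b y) = 0" if "b \<noteq> 0" "a + b \<noteq> 0" for a b x y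
    unfolding weight_proj_nonzero[OF that(1)] polar_frame_comb
    using that(2) by (intro sum.neutral) (auto simp: polar_weight_proj_dual polar_weight_proj_basis)
  show ?thesis
  proof (cases "b = 0")
    case True
    then have "polar Q (weight_proj b y) (weight_proj a x) = 0"
      using *[where a=b and b=a and x=y and y=x] assms True by simp
    then show ?thesis
      by (simp add: polar_commute)
  qed (use * assms in blast)
qed

lemma isotropic_weight_proj:
  assumes "a \<noteq> 0"
  shows "Q (weight_proj a x) = 0"
proof (cases "a > 0")
  case True
  then have "weight_proj a x = frame_comb (\<lambda>u. if d u = a then polar Q x (du u) else 0) (\<lambda>u. 0)"
    unfolding weight_proj_nonzero[OF assms] by (intro frame_comb_cong) (auto dest: degree_pos)
  then show ?thesis
    by (simp add: isotropic_frame_comb_basis)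
next
  case False
  then have "weight_proj a x = frame_comb (\<lambda>u. 0) (\<lambda>u. if d u = - a then polar Q x u else 0)"
    unfolding weight_proj_nonzero[OF assms] by (intro frame_comb_cong) (auto dest: degree_pos)
  then show ?thesis
    by (simp add: isotropic_frame_comb_dual)
qed

lemma linear_weight_proj: "Vector_Spaces.linear (*s) (*s) (weight_proj a)"
proof -
  have "weight_proj a (x + y) = weight_proj a x + weight_proj a y" for x y
    by (cases "a = 0")
      (simp_all add: weight_proj_def hyperbolic_part_add polar_simps frame_comb_add[symmetric] if_distrib
        cong: if_cong)
  moreover have "weight_proj a (c *s x) = c *s weight_proj a x" for c x
    by (cases "a = 0")
      (simp_all add: weight_proj_def hyperbolic_part_scale polar_simps frame_comb_scale[symmetric]
        vector_ssub_ldistrib if_distrib cong: if_cong)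
  ultimately show ?thesis
    by (simp add: Vector_Spaces.linear_iff vec.vector_space_axioms)
qed

lemma dual_in_filtration:
  assumes "u \<in> U"
  shows "du u \<in> X (- d u)"
proof -
  have "polar Q (du u) w = 0" if "w \<in> X (d u + 1)" for w
  proof (rule polar_eq_zero_on_span)
    show "w \<in> vec.span (U \<inter> X (d u + 1))"
      using basis_spans[of "d u + 1"] degree_pos[OF assms] that by auto
  next
    fix v assume "v \<in> U \<inter> X (d u + 1)"
    then show "polar Q (du u) v = 0"
      using assms degree[OF assms, of "d u + 1"] polar_dual_basis by auto
  qed
  moreover have "X (- d u) = perp Q (X (d u + 1))"
    using Q_filtration_perp[OF filtration, of "d u + 1"] degree_pos[OF assms] by simp
  ultimately show ?thesis
    by (simp add: perp_def)
qed

lemma weight_proj_in_filtration: "weight_proj b x \<in> X b"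
proof (cases "b = 0")
  case True
  have "polar Q (x - hyperbolic_part x) w = 0" if "w \<in> X 1" for w
  proof (rule polar_eq_zero_on_span)
    show "w \<in> vec.span (U \<inter> X 1)"
      using basis_spans[of 1] that by auto
  qed (simp add: hyperbolic_part_def polar_simps polar_frame_comb_basis)
  moreover have "X 0 = perp Q (X 1)"
    using Q_filtration_perp[OF filtration, of 1] by simp
  ultimately show ?thesis
    using True by (simp add: weight_proj_def perp_def)
next
  case False
  have subspace: "vec.subspace (X b)"
    by (rule Q_filtration_subspace[OF filtration])
  show ?thesis
    unfolding weight_proj_nonzero[OF False] frame_comb_def
  proof (intro vec.subspace_sum[OF subspace] vec.subspace_add[OF subspace])
    fix u assume "u \<in> U"
    then show "(if d u = b then polar Q x (du u) else 0) *s u \<in> X b"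
      "(if d u = - b then polar Q x u else 0) *s du u \<in> X b"
      using degree[of u b] dual_in_filtration[of u] vec.subspace_scale[OF subspace] vec.subspace_0[OF subspace]
      by auto
  qed
qed

lemma weight_proj_eq_zero_positive:
  assumes "x \<in> X c" and "1 \<le> c" and "a < c"
  shows "weight_proj a x = 0"
proof -
  have x: "x \<in> vec.span (U \<inter> X c)"
    using basis_spans[OF assms(2)] assms(1) by auto
  show ?thesis
  proof (cases "a = 0")
    case True
    have "x \<in> vec.span U"
      using x vec.span_mono[of "U \<inter> X c" U] by auto
    then show ?thesis
      using True by (simp add: weight_proj_def hyperbolic_part_span_basis)
  next
    case False
    have dual_coord: "polar Q x (du u) = 0" if "u \<in> U" "d u = a" for u
    proof -
      have "polar Q (du u) x = 0"
        by (rule polar_eq_zero_on_span[OF _ x])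
          (use that degree[of u c] assms(3) polar_dual_basis in auto)
      then show ?thesis
        by (simp add: polar_commute)
    qed
    have basis_coord: "polar Q x u = 0" if "u \<in> U" for u
      using polar_eq_zero_on_filtration_1 assms(1) that basis_subset
        Q_filtration_antimono[OF filtration assms(2)] by blast
    have "weight_proj a x = frame_comb (\<lambda>u. 0) (\<lambda>u. 0)"
      unfolding weight_proj_nonzero[OF False] by (rule frame_comb_cong) (simp_all add: dual_coord basis_coord)
    then show ?thesis
      by (simp add: frame_comb_zero)
  qed
qed

lemma weight_proj_eq_zero_nonpositive:
  assumes "x \<in> X c" and "c < 1" and "a < c"
  shows "weight_proj a x = 0"
proof -
  have "a \<noteq> 0"
    using assms(2,3) by simp
  have basis_coord: "polar Q x u = 0" if "u \<in> U" "d u = - a" for u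
  proof -
    have "u \<in> X (1 - c)"
      using that degree[of u "1 - c"] assms(3) by simp
    moreover have "X c = perp Q (X (1 - c))"
      using Q_filtration_perp[OF filtration, of "1 - c"] assms(2) by simp
    ultimately show ?thesis
      using assms(1) by (simp add: perp_def)
  qed
  have "weight_proj a x = frame_comb (\<lambda>u. 0) (\<lambda>u. 0)"
    unfolding weight_proj_nonzero[OF \<open>a \<noteq> 0\<close>]
    using assms(2,3) by (intro frame_comb_cong) (auto simp: basis_coord dest: degree_pos)
  then show ?thesis
    by (simp add: frame_comb_zero)
qed

lemma weight_proj_eq_zero: "x \<in> X c \<Longrightarrow> a < c \<Longrightarrow> weight_proj a x = 0"
  using weight_proj_eq_zero_positive weight_proj_eq_zero_nonpositive by (cases "1 \<le> c") auto

definition proj_matrix :: "int \<Rightarrow> 'k^'n^'n" where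
  "proj_matrix a = matrix (weight_proj a)"

lemma proj_matrix_apply: "proj_matrix a *v x = weight_proj a x"
  unfolding proj_matrix_def by (rule matrix_works[OF linear_weight_proj])

lemma orthogonal_grading: "orthogonal_grading Q weights proj_matrix"
proof
  show "finite weights"
    by (rule finite_weights)
  show "sum proj_matrix weights = mat 1"
    by (simp add: matrix_eq sum_matrix_vector_mult proj_matrix_apply sum_weight_proj)
  show "proj_matrix a ** proj_matrix b = (if a = b then proj_matrix a else 0)" for a b
    by (simp add: matrix_eq proj_matrix_apply weight_proj_weight_proj flip: matrix_vector_mul_assoc)
  show "polar Q (proj_matrix a *v x) (proj_matrix b *v y) = 0" if "a + b \<noteq> 0" for a b x y
    using polar_weight_proj[OF that] by (simp add: proj_matrix_apply)
  show "Q (proj_matrix a *v x) = 0" if "a \<noteq> 0" for a x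
    using isotropic_weight_proj[OF that] by (simp add: proj_matrix_apply)
qed

lemma raises_weight:
  assumes "\<And>b x. x \<in> X b \<Longrightarrow> N *v x \<in> X (b + 1)"
  shows "orthogonal_grading.raises_weight weights proj_matrix N"
proof -
  have "proj_matrix a ** N ** proj_matrix b = 0" if "a \<le> b" for a b
    using weight_proj_eq_zero[OF assms[OF weight_proj_in_filtration]] that
    by (simp add: matrix_eq proj_matrix_apply flip: matrix_vector_mul_assoc)
  then show ?thesis
    by (simp add: orthogonal_grading.raises_weight_def[OF orthogonal_grading])
qed

end

lemma Q_filtration_orthogonal_grading:
  assumes "quadratic_form Q" and "nondegenerate Q" and "Q_filtration Q X"
  obtains A P where "orthogonal_grading Q A P"
    and "\<And>N. (\<And>b x. x \<in> X b \<Longrightarrow> N *v x \<in> X (b + 1)) \<Longrightarrow> orthogonal_grading.raises_weight A P N"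
proof -
  interpret qform Q
    by unfold_locales (fact assms(1))
  obtain U where U: "vec.independent U" "U \<subseteq> X 1" "\<And>a. 1 \<le> a \<Longrightarrow> X a \<subseteq> vec.span (U \<inter> X a)"
    using Q_filtration_adapted_basis[OF assms(3)] by blast
  have "finite U"
    using U(1) vec.finiteI_independent by blast
  have "\<exists>d. 1 \<le> d \<and> (\<forall>c. u \<in> X c \<longleftrightarrow> c \<le> d)" if u: "u \<in> U" for u
  proof -
    have "u \<noteq> 0"
      using U(1) u vec.dependent_zero by blast
    then obtain d where "1 \<le> d" "\<And>c. u \<in> X c \<longleftrightarrow> c \<le> d"
      using Q_filtration_degree[OF assms(3), of u] U(2) u by blast
    then show ?thesis
      by blast
  qed
  then obtain d where d: "\<And>u. u \<in> U \<Longrightarrow> 1 \<le> d u" "\<And>u c. u \<in> U \<Longrightarrow> u \<in> X c \<longleftrightarrow> c \<le> d u"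
    by metis
  obtain du where "isotropic_dual Q U du"
    using isotropic_dual_exists[OF assms(2) Q_filtration_subspace[OF assms(3)] _ \<open>finite U\<close> U(1,2)]
      Q_filtration_isotropic[OF assms(3)] by blast
  then interpret adapted_frame Q X U du d
    using assms(3) \<open>finite U\<close> U d by unfold_locales auto
  show thesis
    using that[OF orthogonal_grading raises_weight] by blast
qed

lemma E2E:
  assumes "Q_filtration Q X" and "N \<in> E2 Q X"
  obtains m where "mpow N m = 0" and "\<And>x. Q ((mat 1 + N) *v x) = Q x"
    and "\<And>b x. x \<in> X b \<Longrightarrow> N *v x \<in> X (b + 1)"
proof -
  obtain m where "mpow N m = 0"
    using assms(2) unfolding E2_def tilde_M_def nilpotent_mat_def by blast
  moreover have "Q ((mat 1 + N) *v x) = Q x" for x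
    using assms(2) by (simp add: E2_def tilde_M_def matrix_vector_mult_add_rdistrib add_eq_polar)
  moreover have "N *v x \<in> X (b + 1)" if "x \<in> X b" for b x
    using assms that Q_filtration_antimono[OF assms(1), of "b + 1" "b + 2"] unfolding E2_def by auto
  ultimately show thesis
    using that by blast
qed

lemma is_alg_closure_field_hom: "is_alg_closure \<phi> \<Longrightarrow> field_hom \<phi>"
  unfolding is_alg_closure_def field_hom_def by blast

theorem mainTheorem4:
  fixes Q :: "'k::field^'n \<Rightarrow> 'k" and X :: "int \<Rightarrow> ('k^'n) set"
  assumes "finite (UNIV :: 'k set) \<or> alg_closed TYPE('k)"
    and "quadratic_form Q" and "nondegenerate Q" and "Q_filtration Q X"
  shows "\<forall>N \<in> E2 Q X.
           (alg_closed TYPE('k) \<longrightarrow> mat 1 + N \<in> SO_Q_closed Q) \<and>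
           (finite (UNIV :: 'k set) \<longrightarrow>
              (\<forall>\<phi> :: 'k \<Rightarrow> 'K::field. is_alg_closure \<phi> \<longrightarrow> mat 1 + N \<in> SO_Q_finite \<phi> Q))"
proof (intro ballI conjI impI allI)
  fix N assume "N \<in> E2 Q X"
  then obtain m where nilpotent: "mpow N m = 0" and isometry: "\<And>x. Q ((mat 1 + N) *v x) = Q x"
    and raises_filtration: "\<And>b x. x \<in> X b \<Longrightarrow> N *v x \<in> X (b + 1)"
    using E2E[OF assms(4)] by blast
  obtain A P where "orthogonal_grading Q A P" and graded: "\<And>N.
      (\<And>b x. x \<in> X b \<Longrightarrow> N *v x \<in> X (b + 1)) \<Longrightarrow> orthogonal_grading.raises_weight A P N"
    using Q_filtration_orthogonal_grading[OF assms(2-4)] by blast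
  then interpret orthogonal_grading Q A P
    by simp
  have "raises_weight N"
    using graded raises_filtration by blast
  then show "mat 1 + N \<in> SO_Q_closed Q" if "alg_closed TYPE('k)"
    unfolding SO_Q_closed_def
    using unipotent_in_identity_component[OF alg_closed_imp_infinite[OF that]] isometry nilpotent by blast
  fix \<phi> :: "'k \<Rightarrow> 'K::field"
  assume "finite (UNIV :: 'k set)" and closure: "is_alg_closure \<phi>"
  then have "infinite (UNIV :: 'K set)"
    using alg_closed_imp_infinite unfolding is_alg_closure_def by blast
  then have "map_matrix \<phi> (mat 1 + N) \<in> SO_Q_closed Qt" if "extends_qf \<phi> Q Qt" for Qt
    unfolding SO_Q_closed_def
    using base_change_unipotent_in_identity_component[OF is_alg_closure_field_hom[OF closure] that]
      \<open>raises_weight N\<close> isometry nilpotent by blast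
  moreover have "mat 1 + N \<in> O_Q Q"
    using invertible_mat_1_plus_nilpotent[OF nilpotent] isometry by (simp add: O_Q_def)
  ultimately show "mat 1 + N \<in> SO_Q_finite \<phi> Q"
    unfolding SO_Q_finite_def by blast
qed

end
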